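(* Under the setting in the context, assume that for every $r\in\mathcal U^{(1)}_\varepsilon$ the maximum $\max_{\pi\in\Pi_\rho}J_r(\pi)$ is attained, and let $\Pi_\rho^\star(\mathcal U^{(1)}_\varepsilon):=\bigcup_{r\in\mathcal U^{(1)}_\varepsilon}\arg\max_{\pi\in\Pi_\rho}J_r(\pi)$ and $\mathcal C_{\infty,\mathrm{rel}}(\mathcal U^{(1)}_\varepsilon,\pi;\mu,\mathcal D):=\sup_{\beta\in\Pi_\rho^\star(\mathcal U^{(1)}_\varepsilon)}C_{\infty,\mathrm{rel}}(\beta,\pi;\mu,\mathcal D)$. Suppose the true reward $r^\star\in\mathcal U^{(1)}_\varepsilon$, let $\pi_\rho^\star\in\arg\max_{\pi\in\Pi_\rho}J_{r^\star}(\pi)$, and let $$\pi_\rho^{\mathrm{DRRO}}\in\arg\min_{\pi\in\Pi_\rho}\ \sup_{r\in\mathcal U^{(1)}_\varepsilon}\Big[\max_{\beta\in\Pi_\rho}J_r(\beta)-J_r(\pi)\Big]$$ (assumed to exist). Then $$J_{r^\star}(\pi_\rho^\star)-J_{r^\star}(\pi_\rho^{\mathrm{DRRO}})\le2\varepsilon\,\mathcal C_{\infty,\mathrm{rel}}(\mathcal U^{(1)}_\varepsilon,\pi_\rho^\star;\mu,\mathcal D).$$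
   Context: Setting: prompts $x\sim\mathcal D$ on a space $\mathcal X$; a finite response set $\mathcal Y$; reward functions $r:\mathcal X\times\mathcal Y\to\mathbb R$ (measurable, with the expectations below finite), $r(x)\in\mathbb R^{\mathcal Y}$ the promptwise vector; $\hat r$ a fixed proxy reward. $\Pi_\rho$ is a nonempty set of policies (a local policy class); each $\pi\in\Pi_\rho$ has a bounded measurable linear representation $z_\pi(x)\in\mathbb R^{\mathcal Y}$ (e.g. $z_\pi(x)=\pi(\cdot\mid x)$) with $J_r(\pi)=\mathbb E_{x\sim\mathcal D}[\langle z_\pi(x),r(x)\rangle]$. For each $x$, $\mu_x$ is a probability distribution on $\mathcal Y$ with $\mu_x(y)>0$ for all $y$. Weighted norms: $\|e\|_{1,\mu_x}:=\sum_y\mu_x(y)|e(y)|$, $\|v\|_{\infty,\mu_x^{-1}}:=\max_y|v(y)|/\mu_x(y)$. For $\varepsilon>0$, $\mathcal U^{(1)}_\varepsilon:=\{r:\ \mathbb E_{x\sim\mathcal D}[\|r(x)-\hat r(x)\|_{1,\mu_x}]\le\varepsilon\}$. Relative integrated concentrability: $C_{\infty,\mathrm{rel}}(\beta,\pi;\mu,\mathcal D):=\operatorname{ess\,sup}_{x\sim\mathcal D}\|z_\beta(x)-z_\pi(x)\|_{\infty,\mu_x^{-1}}$. *)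

theory Defs
  imports "HOL-Probability.Probability"
begin

text \<open>Rewards r :: 'x => 'y => real (promptwise vector r x), policies are indices p in a
  policy class with linear representation z p x :: 'y => real; D is the prompt distribution.\<close>

definition Jval :: "'x measure \<Rightarrow> ('p \<Rightarrow> 'x \<Rightarrow> 'y::finite \<Rightarrow> real) \<Rightarrow> ('x \<Rightarrow> 'y \<Rightarrow> real) \<Rightarrow> 'p \<Rightarrow> real" where
  "Jval D z r p = (\<integral>x. (\<Sum>y\<in>UNIV. z p x y * r x y) \<partial>D)"

definition norm1mu :: "('y::finite \<Rightarrow> real) \<Rightarrow> ('y \<Rightarrow> real) \<Rightarrow> real" where
  "norm1mu m e = (\<Sum>y\<in>UNIV. m y * \<bar>e y\<bar>)"

definition norminfmuinv :: "('y::finite \<Rightarrow> real) \<Rightarrow> ('y \<Rightarrow> real) \<Rightarrow> real" where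
  "norminfmuinv m v = (MAX y\<in>UNIV. \<bar>v y\<bar> / m y)"

definition admissible_reward ::
  "'x measure \<Rightarrow> ('x \<Rightarrow> 'y::finite \<Rightarrow> real) \<Rightarrow> ('x \<Rightarrow> 'y \<Rightarrow> real) \<Rightarrow> 'p set \<Rightarrow> ('p \<Rightarrow> 'x \<Rightarrow> 'y \<Rightarrow> real)
     \<Rightarrow> ('x \<Rightarrow> 'y \<Rightarrow> real) \<Rightarrow> bool" where
  "admissible_reward D mu rhat PP z r \<longleftrightarrow>
     (\<forall>y. (\<lambda>x. r x y) \<in> borel_measurable D) \<and>
     integrable D (\<lambda>x. norm1mu (mu x) (\<lambda>y. r x y - rhat x y)) \<and>
     (\<forall>p\<in>PP. integrable D (\<lambda>x. \<Sum>y\<in>UNIV. z p x y * r x y))"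

definition U1 ::
  "'x measure \<Rightarrow> ('x \<Rightarrow> 'y::finite \<Rightarrow> real) \<Rightarrow> ('x \<Rightarrow> 'y \<Rightarrow> real) \<Rightarrow> 'p set \<Rightarrow> ('p \<Rightarrow> 'x \<Rightarrow> 'y \<Rightarrow> real)
     \<Rightarrow> real \<Rightarrow> ('x \<Rightarrow> 'y \<Rightarrow> real) set" where
  "U1 D mu rhat PP z eps = {r. admissible_reward D mu rhat PP z r \<and>
       (\<integral>x. norm1mu (mu x) (\<lambda>y. r x y - rhat x y) \<partial>D) \<le> eps}"

definition is_argmax :: "'p set \<Rightarrow> ('p \<Rightarrow> 'b::linorder) \<Rightarrow> 'p \<Rightarrow> bool" where
  "is_argmax PP f p \<longleftrightarrow> p \<in> PP \<and> (\<forall>q\<in>PP. f q \<le> f p)"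

definition is_argmin :: "'p set \<Rightarrow> ('p \<Rightarrow> 'b::linorder) \<Rightarrow> 'p \<Rightarrow> bool" where
  "is_argmin PP f p \<longleftrightarrow> p \<in> PP \<and> (\<forall>q\<in>PP. f p \<le> f q)"

definition Crel :: "'x measure \<Rightarrow> ('x \<Rightarrow> 'y::finite \<Rightarrow> real) \<Rightarrow> ('p \<Rightarrow> 'x \<Rightarrow> 'y \<Rightarrow> real) \<Rightarrow> 'p \<Rightarrow> 'p \<Rightarrow> ereal" where
  "Crel D mu z b p = esssup D (\<lambda>x. ereal (norminfmuinv (mu x) (\<lambda>y. z b x y - z p x y)))"

definition PiStar :: "'p set \<Rightarrow> ('p \<Rightarrow> 'x \<Rightarrow> 'y::finite \<Rightarrow> real) \<Rightarrow> 'x measure \<Rightarrow> ('x \<Rightarrow> 'y \<Rightarrow> real) set \<Rightarrow> 'p set" where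
  "PiStar PP z D U = (\<Union>r\<in>U. {p. is_argmax PP (Jval D z r) p})"

definition CrelU :: "'x measure \<Rightarrow> ('x \<Rightarrow> 'y::finite \<Rightarrow> real) \<Rightarrow> 'p set \<Rightarrow> ('p \<Rightarrow> 'x \<Rightarrow> 'y \<Rightarrow> real)
     \<Rightarrow> ('x \<Rightarrow> 'y \<Rightarrow> real) set \<Rightarrow> 'p \<Rightarrow> ereal" where
  "CrelU D mu PP z U p = (SUP b\<in>PiStar PP z D U. Crel D mu z b p)"

text \<open>Worst-case regret sup_{r in U} [max_{beta} J_r(beta) - J_r(pi)] (extended real; the max is
  written as a Sup, which equals the max under the attainment hypothesis).\<close>
definition worst_regret :: "'x measure \<Rightarrow> ('p \<Rightarrow> 'x \<Rightarrow> 'y::finite \<Rightarrow> real) \<Rightarrow> 'p set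
     \<Rightarrow> ('x \<Rightarrow> 'y \<Rightarrow> real) set \<Rightarrow> 'p \<Rightarrow> ereal" where
  "worst_regret D z PP U p = (SUP r\<in>U. ereal (Sup (Jval D z r ` PP) - Jval D z r p))"

end

theory Submission
  imports Defs
begin

text \<open>Let \<beta> maximise \<open>J r\<close> for some \<open>r \<in> U\<close>. Since \<open>pistar\<close> maximises \<open>J rstar\<close>, the regret
  \<open>J r \<beta> - J r pistar\<close> is at most \<open>(J r \<beta> - J r pistar) - (J rstar \<beta> - J rstar pistar)\<close>, the
  expectation of \<open>\<langle>z \<beta> - z pistar, r - rstar\<rangle>\<close>. The weighted Hoelder inequality bounds this by
  \<open>Crel \<beta> pistar\<close> times \<open>E \<parallel>r - rstar\<parallel>\<^sub>1\<^sub>,\<^sub>\<mu> \<le> 2 eps\<close>. So the worst-case regret of \<open>pistar\<close> is at most the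
  right-hand side, and the DRRO policy, minimising worst-case regret, has true regret below its own
  worst-case regret and hence below that of \<open>pistar\<close>. Integrability is part of admissibility.\<close>

lemma norm1mu_nonneg:
  fixes m e :: "'y::finite \<Rightarrow> real"
  assumes "\<forall>y. 0 \<le> m y"
  shows "0 \<le> norm1mu m e"
  unfolding norm1mu_def using assms by (simp add: sum_nonneg)

lemma norminfmuinv_nonneg:
  fixes m v :: "'y::finite \<Rightarrow> real"
  assumes "\<forall>y. 0 \<le> m y"
  shows "0 \<le> norminfmuinv m v"
proof -
  obtain y :: 'y where True by simp
  have "0 \<le> \<bar>v y\<bar> / m y" using assms by simp
  also have "\<dots> \<le> norminfmuinv m v" unfolding norminfmuinv_def by (rule Max_ge) auto
  finally show ?thesis .
qed

lemma sum_mult_le_norminfmuinv_norm1mu: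
  fixes d e m :: "'y::finite \<Rightarrow> real"
  assumes m: "\<forall>y. m y > 0"
  shows "(\<Sum>y\<in>UNIV. d y * e y) \<le> norminfmuinv m d * norm1mu m e"
proof -
  let ?N = "norminfmuinv m d"
  have N_ge: "\<bar>d y\<bar> / m y \<le> ?N" for y
    unfolding norminfmuinv_def by (rule Max_ge) auto
  have "(\<Sum>y\<in>UNIV. d y * e y) \<le> (\<Sum>y\<in>UNIV. (\<bar>d y\<bar> / m y) * (m y * \<bar>e y\<bar>))"
  proof (rule sum_mono)
    fix y
    have "d y * e y \<le> \<bar>d y\<bar> * \<bar>e y\<bar>" by (metis abs_ge_self abs_mult)
    also have "\<dots> = (\<bar>d y\<bar> / m y) * (m y * \<bar>e y\<bar>)" using m[rule_format, of y] by simp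
    finally show "d y * e y \<le> (\<bar>d y\<bar> / m y) * (m y * \<bar>e y\<bar>)" .
  qed
  also have "\<dots> \<le> (\<Sum>y\<in>UNIV. ?N * (m y * \<bar>e y\<bar>))"
    using m by (intro sum_mono mult_right_mono[OF N_ge]) (simp add: less_imp_le)
  also have "\<dots> = ?N * norm1mu m e" unfolding norm1mu_def by (simp add: sum_distrib_left)
  finally show ?thesis .
qed

lemma norm1mu_diff_triangle:
  fixes a b c m :: "'y::finite \<Rightarrow> real"
  assumes m: "\<forall>y. 0 \<le> m y"
  shows "norm1mu m (\<lambda>y. a y - b y) \<le> norm1mu m (\<lambda>y. a y - c y) + norm1mu m (\<lambda>y. b y - c y)"
  unfolding norm1mu_def sum.distrib[symmetric]
proof (rule sum_mono)
  fix y
  have "\<bar>a y - b y\<bar> \<le> \<bar>a y - c y\<bar> + \<bar>b y - c y\<bar>" by linarith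
  then show "m y * \<bar>a y - b y\<bar> \<le> m y * \<bar>a y - c y\<bar> + m y * \<bar>b y - c y\<bar>"
    using m[rule_format, of y] by (simp add: distrib_left[symmetric] mult_left_mono)
qed

lemma Crel_nonneg:
  assumes "prob_space D"
    and mu_pos: "\<forall>x\<in>space D. \<forall>y. mu x y > 0"
  shows "0 \<le> Crel D mu z b p"
proof -
  interpret prob_space D by (rule assms(1))
  have "AE x in D. (0::ereal) \<le> ereal (norminfmuinv (mu x) (\<lambda>y. z b x y - z p x y))"
    using mu_pos by (intro AE_I2) (simp add: norminfmuinv_nonneg less_imp_le)
  then have "esssup D (\<lambda>x. 0) \<le> Crel D mu z b p"
    unfolding Crel_def by (intro esssup_AE_mono) auto
  then show ?thesis by (simp add: esssup_const emeasure_space_1)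
qed

lemma Jval_diff_diff_le_Crel:
  assumes mu_pos: "\<forall>x\<in>space D. \<forall>y. mu x y > 0"
    and r: "admissible_reward D mu rhat PP z r"
    and s: "admissible_reward D mu rhat PP z s"
    and bp: "b \<in> PP" "p \<in> PP"
    and C: "Crel D mu z b p = ereal c"
  shows "(Jval D z r b - Jval D z r p) - (Jval D z s b - Jval D z s p)
    \<le> c * ((\<integral>x. norm1mu (mu x) (\<lambda>y. r x y - rhat x y) \<partial>D)
           + (\<integral>x. norm1mu (mu x) (\<lambda>y. s x y - rhat x y) \<partial>D))"
proof -
  let ?f = "\<lambda>q t x. \<Sum>y\<in>UNIV. z q x y * t x y"
  let ?g = "\<lambda>x. ?f b r x - ?f p r x - (?f b s x - ?f p s x)"
  let ?nr = "\<lambda>x. norm1mu (mu x) (\<lambda>y. r x y - rhat x y)"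
  let ?ns = "\<lambda>x. norm1mu (mu x) (\<lambda>y. s x y - rhat x y)"
  let ?nd = "\<lambda>x. norminfmuinv (mu x) (\<lambda>y. z b x y - z p x y)"
  have int_f: "integrable D (?f b r)" "integrable D (?f p r)"
    "integrable D (?f b s)" "integrable D (?f p s)"
    using r s bp by (auto simp: admissible_reward_def)
  have int_n: "integrable D ?nr" "integrable D ?ns"
    using r s by (auto simp: admissible_reward_def)
  have nd_le: "AE x in D. ?nd x \<le> c"
    using esssup_AE[of ?nd D] C unfolding Crel_def by simp
  have "AE x in D. ?g x \<le> c * (?nr x + ?ns x)"
    using nd_le AE_space
  proof eventually_elim
    case (elim x)
    have mx: "\<forall>y. mu x y > 0" using mu_pos elim by blast
    then have mx0: "\<forall>y. 0 \<le> mu x y" by (simp add: less_imp_le)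
    have c0: "0 \<le> c" using norminfmuinv_nonneg[OF mx0, of "\<lambda>y. z b x y - z p x y"] elim by linarith
    have "?g x = (\<Sum>y\<in>UNIV. (z b x y - z p x y) * (r x y - s x y))"
      by (simp add: sum.distrib[symmetric] sum_subtractf[symmetric] algebra_simps)
    also have "\<dots> \<le> ?nd x * norm1mu (mu x) (\<lambda>y. r x y - s x y)"
      by (rule sum_mult_le_norminfmuinv_norm1mu[OF mx])
    also have "\<dots> \<le> c * norm1mu (mu x) (\<lambda>y. r x y - s x y)"
      using elim by (intro mult_right_mono norm1mu_nonneg[OF mx0]) simp
    also have "\<dots> \<le> c * (?nr x + ?ns x)"
      by (rule mult_left_mono[OF norm1mu_diff_triangle[OF mx0] c0])
    finally show ?case .
  qed
  then have "(\<integral>x. ?g x \<partial>D) \<le> (\<integral>x. c * (?nr x + ?ns x) \<partial>D)"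
    using int_f int_n by (intro integral_mono_AE) auto
  then show ?thesis
    using int_f int_n by (simp add: Jval_def)
qed

lemma Sup_image_eq_argmax:
  fixes f :: "'p \<Rightarrow> 'b::conditionally_complete_linorder"
  assumes "is_argmax PP f p"
  shows "Sup (f ` PP) = f p"
  using assms unfolding is_argmax_def by (intro cSup_eq_maximum) auto

lemma regret_le_Crel_U1:
  assumes D: "prob_space D"
    and mu_pos: "\<forall>x\<in>space D. \<forall>y. mu x y > 0"
    and eps: "eps > 0"
    and r: "r \<in> U1 D mu rhat PP z eps"
    and s: "s \<in> U1 D mu rhat PP z eps"
    and b: "is_argmax PP (Jval D z r) b"
    and p: "is_argmax PP (Jval D z s) p"
  shows "ereal (Sup (Jval D z r ` PP) - Jval D z r p) \<le> ereal (2 * eps) * Crel D mu z b p"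
proof -
  have "0 \<le> Crel D mu z b p" by (rule Crel_nonneg[OF D mu_pos])
  then consider "Crel D mu z b p = \<infinity>" | c where "Crel D mu z b p = ereal c" "0 \<le> c"
    by (cases "Crel D mu z b p") auto
  then show ?thesis
  proof cases
    case 1
    then show ?thesis using eps by simp
  next
    case (2 c)
    have "b \<in> PP" "p \<in> PP" using b p by (auto simp: is_argmax_def)
    then have "Jval D z s b \<le> Jval D z s p" using p by (simp add: is_argmax_def)
    moreover have "Jval D z r b - Jval D z r p - (Jval D z s b - Jval D z s p) \<le> c * (eps + eps)"
    proof -
      have "Jval D z r b - Jval D z r p - (Jval D z s b - Jval D z s p)
          \<le> c * ((\<integral>x. norm1mu (mu x) (\<lambda>y. r x y - rhat x y) \<partial>D)
                 + (\<integral>x. norm1mu (mu x) (\<lambda>y. s x y - rhat x y) \<partial>D))"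
        using r s \<open>b \<in> PP\<close> \<open>p \<in> PP\<close> 2
        by (intro Jval_diff_diff_le_Crel[OF mu_pos]) (auto simp: U1_def)
      also have "\<dots> \<le> c * (eps + eps)"
        using r s \<open>0 \<le> c\<close> by (intro mult_left_mono add_mono) (auto simp: U1_def)
      finally show ?thesis .
    qed
    ultimately show ?thesis
      using 2 Sup_image_eq_argmax[OF b] by (simp add: algebra_simps)
  qed
qed

lemma worst_regret_U1_le_CrelU:
  assumes D: "prob_space D"
    and mu_pos: "\<forall>x\<in>space D. \<forall>y. mu x y > 0"
    and eps: "eps > 0"
    and attained: "\<forall>r\<in>U1 D mu rhat PP z eps. \<exists>b. is_argmax PP (Jval D z r) b"
    and s: "s \<in> U1 D mu rhat PP z eps"
    and p: "is_argmax PP (Jval D z s) p"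
  shows "worst_regret D z PP (U1 D mu rhat PP z eps) p
    \<le> ereal (2 * eps) * CrelU D mu PP z (U1 D mu rhat PP z eps) p"
  unfolding worst_regret_def
proof (rule SUP_least)
  fix r
  assume r: "r \<in> U1 D mu rhat PP z eps"
  then obtain b where b: "is_argmax PP (Jval D z r) b" using attained by blast
  have "Crel D mu z b p \<le> CrelU D mu PP z (U1 D mu rhat PP z eps) p"
    unfolding CrelU_def PiStar_def using r b by (intro SUP_upper) blast
  then have "ereal (2 * eps) * Crel D mu z b p
      \<le> ereal (2 * eps) * CrelU D mu PP z (U1 D mu rhat PP z eps) p"
    using eps by (intro ereal_mult_left_mono) auto
  with regret_le_Crel_U1[OF D mu_pos eps r s b p]
  show "ereal (Sup (Jval D z r ` PP) - Jval D z r p)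
      \<le> ereal (2 * eps) * CrelU D mu PP z (U1 D mu rhat PP z eps) p"
    by (rule order_trans)
qed

lemma regret_le_worst_regret_of_argmin:
  assumes r: "r \<in> U"
    and p: "is_argmax PP (Jval D z r) p"
    and q: "is_argmin PP (worst_regret D z PP U) q"
  shows "ereal (Jval D z r p - Jval D z r q) \<le> worst_regret D z PP U p"
proof -
  have "ereal (Jval D z r p - Jval D z r q) = ereal (Sup (Jval D z r ` PP) - Jval D z r q)"
    using Sup_image_eq_argmax[OF p] by simp
  also have "\<dots> \<le> worst_regret D z PP U q"
    unfolding worst_regret_def using r by (rule SUP_upper)
  also have "\<dots> \<le> worst_regret D z PP U p"
    using p q by (simp add: is_argmax_def is_argmin_def)
  finally show ?thesis .
qed

theorem mainTheorem16:
  fixes D :: "'x measure"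
    and PP :: "'p set"
    and z :: "'p \<Rightarrow> 'x \<Rightarrow> 'y::finite \<Rightarrow> real"
    and mu :: "'x \<Rightarrow> 'y \<Rightarrow> real"
    and rhat rstar :: "'x \<Rightarrow> 'y \<Rightarrow> real"
    and eps :: real
    and pistar piD :: 'p
  assumes D: "prob_space D"
    and Pi_ne: "PP \<noteq> {}"
    and z_meas: "\<forall>p\<in>PP. \<forall>y. (\<lambda>x. z p x y) \<in> borel_measurable D"
    and z_bdd: "\<forall>p\<in>PP. \<exists>B. \<forall>x\<in>space D. \<forall>y. \<bar>z p x y\<bar> \<le> B"
    and mu_meas: "\<forall>y. (\<lambda>x. mu x y) \<in> borel_measurable D"
    and mu_pos: "\<forall>x\<in>space D. \<forall>y. mu x y > 0"
    and mu_sum: "\<forall>x\<in>space D. (\<Sum>y\<in>UNIV. mu x y) = 1"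
    and rhat_meas: "\<forall>y. (\<lambda>x. rhat x y) \<in> borel_measurable D"
    and eps_pos: "eps > 0"
    and attained: "\<forall>r\<in>U1 D mu rhat PP z eps. \<exists>p. is_argmax PP (Jval D z r) p"
    and rstar: "rstar \<in> U1 D mu rhat PP z eps"
    and pistar: "is_argmax PP (Jval D z rstar) pistar"
    and piD: "is_argmin PP (worst_regret D z PP (U1 D mu rhat PP z eps)) piD"
  shows "ereal (Jval D z rstar pistar - Jval D z rstar piD)
           \<le> ereal (2 * eps) * CrelU D mu PP z (U1 D mu rhat PP z eps) pistar"
proof -
  have "ereal (Jval D z rstar pistar - Jval D z rstar piD)
      \<le> worst_regret D z PP (U1 D mu rhat PP z eps) pistar"
    by (rule regret_le_worst_regret_of_argmin[OF rstar pistar piD])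
  also have "\<dots> \<le> ereal (2 * eps) * CrelU D mu PP z (U1 D mu rhat PP z eps) pistar"
    by (rule worst_regret_U1_le_CrelU[OF D mu_pos eps_pos attained rstar pistar])
  finally show ?thesis .
qed

end
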